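(* Let $\Omega\subseteq\mathbb{R}^n$ be a bounded open set with Lipschitz boundary and let $f:\mathbb{R}^{N\times n}\to\mathbb{R}$ be a Borel measurable function which is strong Morrey quasiconvex in $\Omega$. Then $f$ is lower semicontinuous.
   Context: For a bounded open set $\Omega\subseteq\mathbb{R}^n$ with Lipschitz boundary, a Borel measurable $f:\mathbb{R}^{N\times n}\to\mathbb{R}$ is strong Morrey quasiconvex in $\Omega$ if: for every $\varepsilon>0$, every $\xi\in\mathbb{R}^{N\times n}$ and every $K>0$ there exists $\delta=\delta(\varepsilon,K,\xi)>0$ such that for every $\varphi\in W^{1,\infty}(\Omega;\mathbb{R}^N)$ (identified with its Lipschitz representative, continuous on $\overline\Omega$) with $\|D\varphi\|_{L^\infty(\Omega)}\le K$ and $\max_{x\in\partial\Omega}|\varphi(x)|\le\delta$ one has $f(\xi)\le\operatorname{ess\,sup}_{x\in\Omega}f(\xi+D\varphi(x))+\varepsilon$. *)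

theory Defs
  imports "HOL-Analysis.Analysis" "HOL-Probability.Essential_Supremum"
begin

text \<open>Lipschitz boundary: near every boundary point, after an orthogonal change of
  coordinates, the set is the strict subgraph (in a distinguished coordinate k) of a
  Lipschitz function that does not depend on that coordinate.\<close>
definition lipschitz_boundary :: "(real^'n) set \<Rightarrow> bool" where
  "lipschitz_boundary \<Omega> \<longleftrightarrow>
     (\<forall>p \<in> frontier \<Omega>. \<exists>r>0. \<exists>R k g L.
        orthogonal_transformation (R :: real^'n \<Rightarrow> real^'n) \<and>
        L-lipschitz_on UNIV (g :: real^'n \<Rightarrow> real) \<and>
        (\<forall>y t. g (y + t *\<^sub>R axis k 1) = g y) \<and>
        \<Omega> \<inter> ball p r = {x \<in> ball p r. (R x) $ k < g (R x)})"

text \<open>Elements of W^{1,\<infinity>}(\<Omega>;R^N) are represented by their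
  Lipschitz representative on the closure, together with their (a.e. defined) gradient D,
  an N x n matrix, which is the pointwise derivative at a.e. point of \<Omega>.\<close>
definition strong_morrey_qc :: "(real^'n) set \<Rightarrow> (real^'n^'m \<Rightarrow> real) \<Rightarrow> bool" where
  "strong_morrey_qc \<Omega> f \<longleftrightarrow>
     (\<forall>\<epsilon>>0. \<forall>\<xi>::real^'n^'m. \<forall>K>0. \<exists>\<delta>>0.
        \<forall>(\<phi>::real^'n \<Rightarrow> real^'m) (D::real^'n \<Rightarrow> real^'n^'m).
          (\<exists>C. C-lipschitz_on (closure \<Omega>) \<phi>) \<longrightarrow>
          (AE x in lebesgue_on \<Omega>. (\<phi> has_derivative (\<lambda>h. D x *v h)) (at x)) \<longrightarrow>
          (AE x in lebesgue_on \<Omega>. norm (D x) \<le> K) \<longrightarrow>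
          (\<forall>x \<in> frontier \<Omega>. norm (\<phi> x) \<le> \<delta>) \<longrightarrow>
          ereal (f \<xi>) \<le> esssup (lebesgue_on \<Omega>) (\<lambda>x. ereal (f (\<xi> + D x))) + ereal \<epsilon>)"

definition lower_semicontinuous :: "('a::topological_space \<Rightarrow> real) \<Rightarrow> bool" where
  "lower_semicontinuous f \<longleftrightarrow> (\<forall>x. \<forall>c < f x. \<forall>\<^sub>F y in nhds x. c < f y)"

end

theory Submission
  imports Defs
begin

text \<open>Test strong Morrey quasiconvexity with the linear maps \<open>\<phi> x = A *v x\<close>: their gradient
  is the constant \<open>A\<close>, so the essential supremum is just \<open>f (\<xi> + A)\<close>, and on the bounded
  boundary \<open>|\<phi>| \<le> |A| sup |x|\<close> becomes as small as required once \<open>A\<close> is small. Hence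
  \<open>f \<xi> \<le> f (\<xi> + A) + \<epsilon>\<close> for all small \<open>A\<close>, which is lower semicontinuity at \<open>\<xi>\<close>.\<close>

lemma norm_matrix_vector_mult_le:
  fixes A :: "real^'n^'m"
  shows "norm (A *v x) \<le> norm A * norm x"
proof -
  have row: "\<bar>(A *v x) $ i\<bar> \<le> norm (A $ i) * norm x" for i
    by (simp add: matrix_mult_dot Cauchy_Schwarz_ineq2)
  have "norm (A *v x) = L2_set (\<lambda>i. \<bar>(A *v x) $ i\<bar>) UNIV"
    by (simp add: norm_vec_def)
  also have "\<dots> \<le> L2_set (\<lambda>i. norm x * norm (A $ i)) UNIV"
    using row by (intro L2_set_mono) (auto simp: mult.commute)
  also have "\<dots> = norm x * norm A"
    by (simp add: L2_set_right_distrib norm_vec_def)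
  finally show ?thesis by (simp add: mult.commute)
qed

lemma matrix_vector_mult_lipschitz_on:
  fixes A :: "real^'n^'m"
  shows "(norm A)-lipschitz_on S ((*v) A)"
proof (rule lipschitz_onI)
  show "dist (A *v x) (A *v y) \<le> norm A * dist x y" for x y
    using norm_matrix_vector_mult_le[of A "x - y"]
    by (simp add: dist_norm matrix_vector_mult_diff_distrib)
qed simp

lemma lower_semicontinuous_metric:
  fixes f :: "'a::metric_space \<Rightarrow> real"
  assumes "\<And>x \<epsilon>. \<epsilon> > 0 \<Longrightarrow> \<exists>d>0. \<forall>y. dist y x < d \<longrightarrow> f x \<le> f y + \<epsilon>"
  shows "lower_semicontinuous f"
  unfolding lower_semicontinuous_def
proof (intro allI impI)
  fix x c assume "c < f x"
  then obtain d where "d > 0" and d: "\<And>y. dist y x < d \<Longrightarrow> f x \<le> f y + (f x - c) / 2"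
    using assms[of "(f x - c) / 2"] by auto
  have "c < f y" if "dist y x < d" for y
    using d[OF that] \<open>c < f x\<close> by (simp add: field_simps)
  then show "\<forall>\<^sub>F y in nhds x. c < f y"
    unfolding eventually_nhds_metric using \<open>d > 0\<close> by blast
qed

lemma strong_morrey_qcD:
  fixes \<xi> :: "real^'n^'m" and \<Omega> :: "(real^'n) set" and f :: "real^'n^'m \<Rightarrow> real"
  assumes "strong_morrey_qc \<Omega> f" and "\<epsilon> > 0" and "K > 0"
  obtains \<delta> where "\<delta> > 0" and "\<And>(\<phi>::real^'n \<Rightarrow> real^'m) (D::real^'n \<Rightarrow> real^'n^'m).
      (\<exists>C. C-lipschitz_on (closure \<Omega>) \<phi>) \<Longrightarrow>
      (AE x in lebesgue_on \<Omega>. (\<phi> has_derivative (\<lambda>h. D x *v h)) (at x)) \<Longrightarrow>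
      (AE x in lebesgue_on \<Omega>. norm (D x) \<le> K) \<Longrightarrow>
      (\<forall>x \<in> frontier \<Omega>. norm (\<phi> x) \<le> \<delta>) \<Longrightarrow>
      ereal (f \<xi>) \<le> esssup (lebesgue_on \<Omega>) (\<lambda>x. ereal (f (\<xi> + D x))) + ereal \<epsilon>"
  using assms unfolding strong_morrey_qc_def by blast

lemma strong_morrey_qc_linear_perturbation:
  fixes \<xi> :: "real^'n^'m" and \<Omega> :: "(real^'n) set" and f :: "real^'n^'m \<Rightarrow> real"
  assumes qc: "strong_morrey_qc \<Omega> f" and "bounded \<Omega>" and "\<epsilon> > 0"
  obtains d where "d > 0" and "\<And>A. norm A < d \<Longrightarrow> f \<xi> \<le> f (\<xi> + A) + \<epsilon>"
proof -
  obtain \<delta> where "\<delta> > 0" and test: "\<And>(\<phi>::real^'n \<Rightarrow> real^'m) (D::real^'n \<Rightarrow> real^'n^'m).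
      (\<exists>C. C-lipschitz_on (closure \<Omega>) \<phi>) \<Longrightarrow>
      (AE x in lebesgue_on \<Omega>. (\<phi> has_derivative (\<lambda>h. D x *v h)) (at x)) \<Longrightarrow>
      (AE x in lebesgue_on \<Omega>. norm (D x) \<le> 1) \<Longrightarrow>
      (\<forall>x \<in> frontier \<Omega>. norm (\<phi> x) \<le> \<delta>) \<Longrightarrow>
      ereal (f \<xi>) \<le> esssup (lebesgue_on \<Omega>) (\<lambda>x. ereal (f (\<xi> + D x))) + ereal \<epsilon>"
    by (rule strong_morrey_qcD[OF qc \<open>\<epsilon> > 0\<close> zero_less_one, where \<xi>=\<xi>]) (rule that)
  have "bounded (frontier \<Omega>)"
    using bounded_closure[OF \<open>bounded \<Omega>\<close>] by (rule bounded_subset) (simp add: frontier_closures)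
  then obtain M where "M > 0" and M: "\<And>x. x \<in> frontier \<Omega> \<Longrightarrow> norm x \<le> M"
    by (auto simp: bounded_pos)
  define d where "d = min 1 (\<delta> / M)"
  show thesis
  proof
    show "d > 0" using \<open>\<delta> > 0\<close> \<open>M > 0\<close> by (simp add: d_def)
  next
    fix A :: "real^'n^'m" assume "norm A < d"
    have boundary: "norm (A *v x) \<le> \<delta>" if "x \<in> frontier \<Omega>" for x
    proof -
      have "norm (A *v x) \<le> norm A * M"
        using norm_matrix_vector_mult_le[of A x] M[OF that]
        by (meson mult_left_mono norm_ge_zero order_trans)
      also have "\<dots> \<le> \<delta> / M * M"
        using \<open>norm A < d\<close> \<open>M > 0\<close> by (intro mult_right_mono) (auto simp: d_def)
      finally show ?thesis using \<open>M > 0\<close> by simp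
    qed
    have "ereal (f \<xi>) \<le> esssup (lebesgue_on \<Omega>) (\<lambda>x. ereal (f (\<xi> + A))) + ereal \<epsilon>"
    proof (rule test)
      show "\<exists>C. C-lipschitz_on (closure \<Omega>) ((*v) A)"
        using matrix_vector_mult_lipschitz_on by blast
      show "AE x in lebesgue_on \<Omega>. ((*v) A has_derivative (\<lambda>h. A *v h)) (at x)"
        by (simp add: bounded_linear_imp_has_derivative)
      show "AE x in lebesgue_on \<Omega>. norm A \<le> 1"
        using \<open>norm A < d\<close> by (simp add: d_def)
    qed (use boundary in blast)
    also have "esssup (lebesgue_on \<Omega>) (\<lambda>x. ereal (f (\<xi> + A))) \<le> ereal (f (\<xi> + A))"
      by (rule esssup_I) auto
    finally show "f \<xi> \<le> f (\<xi> + A) + \<epsilon>"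
      by (simp add: add_right_mono)
  qed
qed

theorem mainTheorem2:
  fixes \<Omega> :: "(real^'n) set" and f :: "real^'n^'m \<Rightarrow> real"
  assumes "bounded \<Omega>" and "open \<Omega>" and "lipschitz_boundary \<Omega>"
    and "f \<in> borel_measurable borel"
    and "strong_morrey_qc \<Omega> f"
  shows "lower_semicontinuous f"
proof (rule lower_semicontinuous_metric)
  fix \<xi> :: "real^'n^'m" and \<epsilon> :: real assume "\<epsilon> > 0"
  obtain d where "d > 0" and d: "\<And>A. norm A < d \<Longrightarrow> f \<xi> \<le> f (\<xi> + A) + \<epsilon>"
    by (rule strong_morrey_qc_linear_perturbation[OF assms(5,1) \<open>\<epsilon> > 0\<close>, where \<xi>=\<xi>]) (rule that)
  have "f \<xi> \<le> f \<eta> + \<epsilon>" if "dist \<eta> \<xi> < d" for \<eta>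
    using d[of "\<eta> - \<xi>"] that by (simp add: dist_norm)
  then show "\<exists>d>0. \<forall>\<eta>. dist \<eta> \<xi> < d \<longrightarrow> f \<xi> \<le> f \<eta> + \<epsilon>"
    using \<open>d > 0\<close> by blast
qed

end
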